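(* There exists an infinite word $w$ over the alphabet $\{0,1,2\}$ such that $w^{0\cup1}$, $w^{0\cup2}$ and $w^{1\cup2}$ are all weak abelian periodic, while $w$ itself is not weak abelian periodic.
   Context: For an infinite word $w$ over an alphabet $\Sigma$ and distinct letters $a,b\in\Sigma$, $w^{a\cup b}$ denotes the image of $w$ under the letter-to-letter morphism sending $b\mapsto a$ and $x\mapsto x$ for every $x\neq b$ (i.e. the letters $a$ and $b$ are identified). For a finite word $u$, $|u|_a$ is the number of occurrences of $a$ in $u$ and $\rho_a(u)=|u|_a/|u|$ for nonempty $u$. An infinite word $w$ over $\Sigma$ is weak abelian periodic if $w=v_0v_1v_2\cdots$ with $v_0$ finite and $v_1,v_2,\dots$ nonempty finite words such that $\rho_a(v_i)=\rho_a(v_j)$ for all $a\in\Sigma$ and all $i,j\ge1$. *)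

theory Defs
  imports Complex_Main
begin

definition letter_count :: "(nat \<Rightarrow> 'a) \<Rightarrow> 'a \<Rightarrow> nat \<Rightarrow> nat \<Rightarrow> nat" where
  "letter_count w a m n = card {k. m \<le> k \<and> k < n \<and> w k = a}"

definition density :: "(nat \<Rightarrow> 'a) \<Rightarrow> 'a \<Rightarrow> nat \<Rightarrow> nat \<Rightarrow> real" where
  "density w a m n = real (letter_count w a m n) / real (n - m)"

text \<open>w = v0 v1 v2 ... with cut points p 0 < p 1 < ...; v0 = w[0..p 0),
  v (i+1) = w[p i .. p (i+1)) nonempty; all blocks v1, v2, ... have equal letter densities.\<close>
definition weak_abelian_periodic :: "(nat \<Rightarrow> 'a) \<Rightarrow> bool" where
  "weak_abelian_periodic w \<longleftrightarrow>
     (\<exists>p :: nat \<Rightarrow> nat. strict_mono p \<and>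
        (\<forall>a i j. density w a (p i) (p (Suc i)) = density w a (p j) (p (Suc j))))"

definition identify :: "'a \<Rightarrow> 'a \<Rightarrow> (nat \<Rightarrow> 'a) \<Rightarrow> (nat \<Rightarrow> 'a)" where
  "identify a b w = (\<lambda>k. if w k = b then a else w k)"

end

theory Submission
  imports Defs "HOL-Library.Infinite_Set"
begin

text \<open>The witness writes the letter \<open>k mod 3\<close> on the whole block \<open>[k!, (k+1)!)\<close>.
  After identifying two letters the word is binary, and the prefix excess \<open>2|u|\<^sub>z - n\<close> of
  the remaining letter \<open>z\<close> is \<open>\<le> 0\<close> at the end of a block of other letters and \<open>\<ge> 0\<close> at the end
  of a block of \<open>z\<close>'s; so it vanishes infinitely often, and cutting at these balanced prefixes
  yields blocks of density 1/2. If the word itself were weak abelian periodic, every letter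
  would occur in \<open>[p\<^sub>0, p\<^sub>i)\<close> with a fixed positive frequency. But at a cut point
  \<open>P \<in> [k!, (k+1)!)\<close> the letter absent from the last two blocks has occurred at most
  \<open>(k-1)! \<le> P/k\<close> times, so its frequency would be below \<open>2/k\<close> for arbitrarily large \<open>k\<close>.\<close>

lemma letter_count_eq_sum:
  "letter_count w a m n = (\<Sum>k = m..<n. if w k = a then 1 else 0)"
proof -
  have "{k. m \<le> k \<and> k < n \<and> w k = a} = {m..<n} \<inter> {k. w k = a}" by auto
  then show ?thesis by (simp add: letter_count_def sum.If_cases)
qed

lemma letter_count_split:
  "m \<le> n \<Longrightarrow> n \<le> q \<Longrightarrow> letter_count w a m q = letter_count w a m n + letter_count w a n q"
  by (simp add: letter_count_eq_sum sum.atLeastLessThan_concat)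

lemma letter_count_Suc:
  "m \<le> n \<Longrightarrow> letter_count w a m (Suc n) = letter_count w a m n + (if w n = a then 1 else 0)"
  by (simp add: letter_count_eq_sum)

lemma letter_count_le: "letter_count w a m n \<le> n - m"
  unfolding letter_count_eq_sum
  using sum_mono[of "{m..<n}" "\<lambda>k. if w k = a then 1 else 0" "\<lambda>_. 1::nat"] by simp

lemma letter_count_eq_0:
  "(\<And>k. m \<le> k \<Longrightarrow> k < n \<Longrightarrow> w k \<noteq> a) \<Longrightarrow> letter_count w a m n = 0"
  by (simp add: letter_count_eq_sum)

lemma letter_count_eq_length:
  "(\<And>k. m \<le> k \<Longrightarrow> k < n \<Longrightarrow> w k = a) \<Longrightarrow> letter_count w a m n = n - m"
  by (simp add: letter_count_eq_sum)

lemma letter_count_mono: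
  "m \<le> m' \<Longrightarrow> m' \<le> n' \<Longrightarrow> n' \<le> n \<Longrightarrow> letter_count w a m' n' \<le> letter_count w a m n"
  using letter_count_split[of m m' n w a] letter_count_split[of m' n' n w a] by simp

lemma letter_count_two_letters:
  assumes "\<And>k. u k = x \<or> u k = z" "x \<noteq> z"
  shows "letter_count u x m n + letter_count u z m n = n - m"
proof -
  have "(if u k = x then 1 else 0) + (if u k = z then 1 else 0) = (1::nat)" for k
    using assms(1)[of k] assms(2) by auto
  then show ?thesis by (simp add: letter_count_eq_sum flip: sum.distrib)
qed

lemma letter_count_identify_other:
  "z \<noteq> x \<Longrightarrow> z \<noteq> y \<Longrightarrow> letter_count (identify x y w) z m n = letter_count w z m n"
  by (auto simp: letter_count_eq_sum identify_def intro!: sum.cong)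

lemma weak_abelian_periodic_linear_counts:
  assumes "weak_abelian_periodic w"
  obtains p :: "nat \<Rightarrow> nat" and r where "strict_mono p"
    "\<And>a i. real (letter_count w a (p 0) (p i)) = r a * real (p i - p 0)"
proof -
  obtain p where p: "strict_mono p"
    and dens: "\<And>a i. density w a (p i) (p (Suc i)) = density w a (p 0) (p 1)"
    using assms unfolding weak_abelian_periodic_def by (metis One_nat_def)
  define r where "r a = density w a (p 0) (p 1)" for a
  have linear: "real (letter_count w a (p 0) (p i)) = r a * real (p i - p 0)" for a i
  proof (induction i)
    case (Suc i)
    have step: "p i < p (Suc i)" "p 0 \<le> p i"
      using p by (simp_all add: strict_mono_Suc_iff strict_mono_less_eq)
    have "real (letter_count w a (p i) (p (Suc i))) = r a * real (p (Suc i) - p i)"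
      using dens[of a i] step(1) by (simp add: r_def density_def field_simps)
    with Suc.IH step show ?case
      by (simp add: letter_count_split[of "p 0" "p i" "p (Suc i)"] algebra_simps)
  qed (simp add: letter_count_eq_sum)
  show ?thesis by (rule that[OF p linear])
qed

lemma weak_abelian_periodic_if_linear_prefix_counts:
  assumes "infinite S" "\<And>a n. n \<in> S \<Longrightarrow> real (letter_count w a 0 n) = r a * real n"
  shows "weak_abelian_periodic w"
  unfolding weak_abelian_periodic_def
proof (intro exI conjI allI)
  let ?p = "enumerate S"
  show p: "strict_mono ?p" using assms(1) by (rule strict_mono_enumerate)
  have "density w a (?p i) (?p (Suc i)) = r a" for a i
  proof -
    have lt: "?p i < ?p (Suc i)" using p by (simp add: strict_mono_Suc_iff)
    have "real (letter_count w a 0 (?p (Suc i))) =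
        real (letter_count w a 0 (?p i)) + real (letter_count w a (?p i) (?p (Suc i)))"
      using letter_count_split[of 0 "?p i" "?p (Suc i)" w a] lt by simp
    then have "real (letter_count w a (?p i) (?p (Suc i))) = r a * real (?p (Suc i) - ?p i)"
      using assms(2)[OF enumerate_in_set[OF assms(1)], of a] lt
      by (simp add: algebra_simps)
    with lt show ?thesis by (simp add: density_def)
  qed
  then show "density w a (?p i) (?p (Suc i)) = density w a (?p j) (?p (Suc j))" for a i j
    by simp
qed

lemma weak_abelian_periodic_binary:
  assumes letters: "\<And>k. u k = x \<or> u k = z" and "x \<noteq> z"
    and balanced: "infinite {n. 2 * letter_count u z 0 n = n}"
  shows "weak_abelian_periodic u"
proof (rule weak_abelian_periodic_if_linear_prefix_counts[OF balanced])
  fix a n assume "n \<in> {n. 2 * letter_count u z 0 n = n}"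
  then have "2 * letter_count u z 0 n = n" by simp
  moreover have "letter_count u x 0 n + letter_count u z 0 n = n"
    using letter_count_two_letters[OF letters \<open>x \<noteq> z\<close>] by simp
  moreover have "letter_count u a 0 n = 0" if "a \<noteq> x" "a \<noteq> z"
    using letters that by (metis letter_count_eq_0)
  ultimately show "real (letter_count u a 0 n) = (if a = x \<or> a = z then 1/2 else 0) * real n"
    by auto
qed

lemma balanced_prefix_between:
  assumes "a \<le> b" "2 * letter_count w z 0 a \<le> a" "b \<le> 2 * letter_count w z 0 b"
  shows "\<exists>n. a \<le> n \<and> n \<le> b \<and> 2 * letter_count w z 0 n = n"
proof -
  define excess where "excess n = 2 * int (letter_count w z 0 n) - int n" for n
  have "\<forall>i. a \<le> i \<and> i < b \<longrightarrow> \<bar>excess (Suc i) - excess i\<bar> \<le> 1"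
    by (simp add: excess_def letter_count_Suc)
  then obtain n where "a \<le> n" "n \<le> b" "excess n = 0"
    using nat_intermed_int_val[of a b excess 0] assms by (force simp: excess_def)
  then show ?thesis by (auto simp: excess_def)
qed

definition fact_index :: "nat \<Rightarrow> nat" where
  "fact_index n = (LEAST k. n < fact (Suc k))"

definition factorial_word :: "nat \<Rightarrow> nat" where
  "factorial_word n = fact_index n mod 3"

lemma fact_index_eq:
  assumes "fact k \<le> n" "n < fact (Suc k)"
  shows "fact_index n = k"
  unfolding fact_index_def
proof (rule Least_equality)
  fix y assume "n < fact (Suc y)"
  show "k \<le> y"
  proof (rule ccontr)
    assume "\<not> k \<le> y"
    then have "fact (Suc y) \<le> (fact k :: nat)" by (intro fact_mono_nat) simp
    with assms(1) \<open>n < fact (Suc y)\<close> show False by simp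
  qed
qed (rule assms(2))

lemma fact_block_exists:
  fixes n :: nat
  assumes "fact K \<le> n"
  shows "\<exists>k\<ge>K. fact k \<le> n \<and> n < fact (Suc k)"
proof -
  have "\<forall>j. fact j \<le> n \<longrightarrow> j \<le> n" using fact_ge_self le_trans by blast
  then obtain k where k: "fact k \<le> n" and greatest: "\<And>j. fact j \<le> n \<Longrightarrow> j \<le> k"
    using Nat.ex_has_greatest_nat[of "\<lambda>j. fact j \<le> n" K n] assms by blast
  have "n < fact (Suc k)" using greatest[of "Suc k"] by linarith
  with k greatest[OF assms] show ?thesis by blast
qed

lemma factorial_word_block: "fact k \<le> n \<Longrightarrow> n < fact (Suc k) \<Longrightarrow> factorial_word n = k mod 3"
  by (simp add: factorial_word_def fact_index_eq)

lemma letter_count_factorial_word_block: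
  "letter_count factorial_word a (fact k) (fact (Suc k)) =
     (if a = k mod 3 then fact (Suc k) - fact k else 0)"
proof (cases "a = k mod 3")
  case True
  have "letter_count factorial_word a (fact k) (fact (Suc k)) = fact (Suc k) - fact k"
    by (rule letter_count_eq_length) (simp add: True factorial_word_block)
  with True show ?thesis by simp
next
  case False
  have "letter_count factorial_word a (fact k) (fact (Suc k)) = 0"
    by (rule letter_count_eq_0) (use False factorial_word_block in simp)
  with False show ?thesis by simp
qed

lemma factorial_word_balanced_prefixes:
  assumes "z < 3"
  shows "infinite {n. 2 * letter_count factorial_word z 0 n = n}"
  unfolding infinite_nat_iff_unbounded_le
proof
  fix m
  define k where "k = 3 * m + z + 1"
  have "m < k" by (simp add: k_def)
  have letters: "k mod 3 \<noteq> z" "Suc (Suc k) mod 3 = z" using assms unfolding k_def by presburger+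
  define a where "a = (fact (Suc k) :: nat)"
  define b where "b = (fact (Suc (Suc (Suc k))) :: nat)"
  have "letter_count factorial_word z 0 a = letter_count factorial_word z 0 (fact k)"
    using letter_count_split[of 0 "fact k" "fact (Suc k)" factorial_word z] letters(1)
    by (simp add: a_def letter_count_factorial_word_block fact_mono_nat del: fact_Suc)
  also have "\<dots> \<le> fact k" using letter_count_le[of factorial_word z 0 "fact k"] by simp
  finally have "letter_count factorial_word z 0 a \<le> fact k" .
  moreover have "fact k \<le> k * fact k" "a = fact k + k * fact k"
    using \<open>m < k\<close> by (simp_all add: a_def)
  ultimately have "2 * letter_count factorial_word z 0 a \<le> a" by linarith
  moreover
  have "fact (Suc (Suc (Suc k))) - fact (Suc (Suc k)) \<le> letter_count factorial_word z 0 b"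
    using letter_count_mono[of 0 "fact (Suc (Suc k))" "fact (Suc (Suc (Suc k)))" b factorial_word z]
    by (simp add: b_def letter_count_factorial_word_block letters(2) fact_mono_nat del: fact_Suc)
  then have "b \<le> 2 * letter_count factorial_word z 0 b" by (simp add: b_def)
  moreover have "m < a" using \<open>m < k\<close> fact_ge_self[of "Suc k"] by (simp add: a_def del: fact_Suc)
  moreover have "a \<le> b" by (simp add: a_def b_def fact_mono_nat del: fact_Suc)
  ultimately obtain n where "m \<le> n" "2 * letter_count factorial_word z 0 n = n"
    using balanced_prefix_between[of a b factorial_word z] by (meson le_trans less_imp_le)
  then show "\<exists>n\<ge>m. n \<in> {n. 2 * letter_count factorial_word z 0 n = n}" by blast
qed

lemma factorial_word_recurrent:
  assumes "e < 3"
  shows "\<exists>q\<ge>m. factorial_word q = e"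
proof (intro exI conjI)
  define k where "k = 3 * (m + 1) + e"
  show "m \<le> fact k" using fact_ge_self[of k] by (simp add: k_def)
  have "fact k < (fact (Suc k) :: nat)" by (rule fact_less_mono_nat) (simp_all add: k_def)
  then have "factorial_word (fact k) = k mod 3" by (simp add: factorial_word_block del: fact_Suc)
  moreover have "k mod 3 = e" using assms unfolding k_def by presburger
  ultimately show "factorial_word (fact k) = e" by simp
qed

lemma letter_count_factorial_word_rare_letter:
  assumes "fact (Suc j) \<le> P" "P < fact (Suc (Suc j))"
  shows "letter_count factorial_word ((j + 2) mod 3) 0 P \<le> fact j"
proof -
  have "letter_count factorial_word ((j + 2) mod 3) (fact j) P = 0"
  proof (rule letter_count_eq_0)
    fix q assume "fact j \<le> q" "q < P"
    then have "factorial_word q = j mod 3 \<or> factorial_word q = Suc j mod 3"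
      using assms factorial_word_block[of j q] factorial_word_block[of "Suc j" q] by linarith
    moreover have "(j + 2) mod 3 \<noteq> j mod 3" "(j + 2) mod 3 \<noteq> Suc j mod 3" by presburger+
    ultimately show "factorial_word q \<noteq> (j + 2) mod 3" by metis
  qed
  moreover have "fact j \<le> P" using assms(1) fact_mono_nat[of j "Suc j"] by linarith
  ultimately show ?thesis
    using letter_count_split[of 0 "fact j" P factorial_word] letter_count_le[of factorial_word _ 0 "fact j"]
    by simp
qed

lemma factorial_word_not_weak_abelian_periodic: "\<not> weak_abelian_periodic factorial_word"
proof
  assume "weak_abelian_periodic factorial_word"
  then obtain p :: "nat \<Rightarrow> nat" and r where p: "strict_mono p"
    and linear: "\<And>a i. real (letter_count factorial_word a (p 0) (p i)) = r a * real (p i - p 0)"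
    by (rule weak_abelian_periodic_linear_counts) blast
  have p_ge: "i \<le> p i" for i using p by (rule seq_suble)
  have r_pos: "0 < r e" if e: "e < 3" for e
  proof -
    obtain q where "p 0 \<le> q" "factorial_word q = e" using factorial_word_recurrent[OF e] by blast
    then have "1 \<le> letter_count factorial_word e (p 0) (p (Suc q))"
      using letter_count_mono[of "p 0" q "Suc q" "p (Suc q)" factorial_word e] p_ge[of "Suc q"]
      by (simp add: letter_count_eq_sum)
    then have "1 \<le> r e * real (p (Suc q) - p 0)" using linear[of e "Suc q"] by linarith
    then show ?thesis by (smt (verit) mult_nonpos_nonneg of_nat_0_le_iff)
  qed
  obtain K :: nat where K: "2 / r 0 + 2 / r 1 + 2 / r 2 < K" using reals_Archimedean2 by blast
  define i where "i = fact K + 2 * p 0"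
  have P: "fact K \<le> p i" "2 * p 0 < p i" using p_ge[of i] fact_gt_zero[of K, where 'a = nat]
    unfolding i_def by linarith+
  obtain k where "K \<le> k" "fact k \<le> p i" "p i < fact (Suc k)"
    using fact_block_exists[OF P(1)] by blast
  moreover obtain j where j: "k = Suc j" using \<open>p i < fact (Suc k)\<close> \<open>fact k \<le> p i\<close>
    by (cases k) auto
  ultimately have block: "K \<le> Suc j" "fact (Suc j) \<le> p i" "p i < fact (Suc (Suc j))" by simp_all
  define e where "e = (j + 2) mod 3" \<comment> \<open>the letter of neither block \<open>j\<close> nor block \<open>Suc j\<close>\<close>
  define R where "R = real (p i - p 0)"
  have "R > 0" using P(2) by (simp add: R_def)
  have "letter_count factorial_word e (p 0) (p i) \<le> fact j"
    using letter_count_mono[of 0 "p 0" "p i" "p i" factorial_word e] P(2)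
      letter_count_factorial_word_rare_letter[OF block(2,3)]
    by (simp add: e_def)
  then have upper: "r e * R \<le> real (fact j)" by (metis R_def linear of_nat_le_iff)
  have "Suc j * fact j \<le> 2 * (p i - p 0)" using block(2) P(2) by simp
  then have lower: "real (Suc j) * real (fact j) \<le> 2 * R"
    unfolding R_def by (metis of_nat_le_iff of_nat_mult of_nat_numeral)
  have "e = 0 \<or> e = 1 \<or> e = 2" unfolding e_def by presburger
  moreover have "0 < 2 / r 0" "0 < 2 / r 1" "0 < 2 / r 2" using r_pos by simp_all
  ultimately have "2 / r e \<le> 2 / r 0 + 2 / r 1 + 2 / r 2" by auto
  also have "\<dots> < real (Suc j)" using K block(1) by linarith
  finally have "2 < r e * real (Suc j)" using r_pos[of e] by (simp add: e_def field_simps)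
  then have "2 * R < r e * real (Suc j) * R" using \<open>R > 0\<close> by simp
  also have "\<dots> \<le> real (Suc j) * real (fact j)"
    using mult_left_mono[OF upper, of "real (Suc j)"] by (simp add: algebra_simps)
  finally show False using lower by linarith
qed

lemma weak_abelian_periodic_identify_factorial_word:
  assumes "distinct [a, b, c]" "a < 3" "b < 3" "c < 3"
  shows "weak_abelian_periodic (identify a b factorial_word)"
proof (rule weak_abelian_periodic_binary)
  show "identify a b factorial_word k = a \<or> identify a b factorial_word k = c" for k
  proof -
    have "factorial_word k < 3" by (simp add: factorial_word_def)
    with assms show ?thesis unfolding identify_def by auto
  qed
  show "a \<noteq> c" using assms(1) by simp
  show "infinite {n. 2 * letter_count (identify a b factorial_word) c 0 n = n}"
    using factorial_word_balanced_prefixes[OF assms(4)] assms(1)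
    by (simp add: letter_count_identify_other)
qed

theorem proposition4:
  shows "\<exists>w :: nat \<Rightarrow> nat. (\<forall>k. w k \<in> {0, 1, 2}) \<and>
           weak_abelian_periodic (identify 0 1 w) \<and>
           weak_abelian_periodic (identify 0 2 w) \<and>
           weak_abelian_periodic (identify 1 2 w) \<and>
           \<not> weak_abelian_periodic w"
proof (intro exI[of _ factorial_word] conjI allI)
  show "factorial_word k \<in> {0, 1, 2}" for k
    using mod_less_divisor[of 3 "fact_index k"] by (auto simp: factorial_word_def)
  show "weak_abelian_periodic (identify 0 1 factorial_word)"
    by (rule weak_abelian_periodic_identify_factorial_word[of 0 1 2]) simp_all
  show "weak_abelian_periodic (identify 0 2 factorial_word)"
    by (rule weak_abelian_periodic_identify_factorial_word[of 0 2 1]) simp_all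
  show "weak_abelian_periodic (identify 1 2 factorial_word)"
    by (rule weak_abelian_periodic_identify_factorial_word[of 1 2 0]) simp_all
qed (rule factorial_word_not_weak_abelian_periodic)

end
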